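(* Let $p\ge 2$ and $\varphi\in\mathbb{C}^{p-1}\setminus\Omega$. Then $\dim Z^2_{1}(F_\varphi,F_\varphi)=2(p-1)$; a basis is given by the cochains $\psi^1_{2,j}$ ($3\le j\le 2p$) defined by $\psi^1_{2,j}(X_2,X_j)=X_1$ and zero on all other basis pairs (up to antisymmetry).
   Context: Let $p\ge 2$ and $\varphi=(\varphi_1,\dots,\varphi_{p-1})\in\mathbb{C}^{p-1}$. $F_\varphi$ denotes the $2p$-dimensional complex Lie algebra with basis $X_1,\dots,X_{2p}$ whose nonzero brackets (up to antisymmetry) are $[X_1,X_2]=X_1$, $[X_2,X_{2k+1}]=\varphi_kX_{2k+1}$, $[X_2,X_{2k+2}]=-(1+\varphi_k)X_{2k+2}$, $[X_{2k+1},X_{2k+2}]=X_1$ for $1\le k\le p-1$. It is graded by $(F_\varphi)_0=\mathbb{C}X_2$, $(F_\varphi)_1=\operatorname{span}\{X_3,\dots,X_{2p}\}$, $(F_\varphi)_2=\mathbb{C}X_1$. A $2$-cochain $\psi$ is homogeneous of degree $k$ if $\psi((F_\varphi)_i,(F_\varphi)_j)\subset(F_\varphi)_{i+j+k}$; $Z^2_k(F_\varphi,F_\varphi)$ denotes the space of homogeneous degree-$k$ $2$-cocycles of the Chevalley–Eilenberg complex with adjoint coefficients. $\Omega=\Omega_1\cup\Omega_2\subset\mathbb{C}^{p-1}$, where $\Omega_1$ is the union of the hyperplanes $\{1+\varphi_i+\varphi_j=0\}$, $\{2+\varphi_i+\varphi_j=0\}$ ($1\le i,j\le p-1$), $\{\varphi_i-\varphi_j=0\}$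 ($i\ne j$), $\{\varphi_i=0\}$, $\{\varphi_i+1=0\}$, $\{2\varphi_i+1=0\}$, and $\Omega_2$ is the union of $\{1+\varphi_i-\varphi_j=0\}$, $\{\varphi_i+\varphi_j=0\}$, $\{2+\varphi_i=0\}$, $\{1-\varphi_i=0\}$, $\{1+2\varphi_i-\varphi_j=0\}$, $\{1+2\varphi_i+\varphi_j=0\}$, $\{2\varphi_i-\varphi_j=0\}$, $\{2+2\varphi_i+\varphi_j=0\}$ ($1\le i,j\le p-1$). *)

theory Defs
  imports "HOL-Analysis.Analysis" "HOL-Library.Function_Algebras"
begin

text \<open>Elements of F_phi are coordinate vectors v :: nat => complex, with v k the
coefficient of X_k (only indices 1..2p are meaningful).  phi :: nat => complex
encodes (phi_1,...,phi_{p-1}); only indices 1..p-1 are used.\<close>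

type_synonym vec = "nat \<Rightarrow> complex"

text \<open>A 2-cochain psi is given by its values on basis pairs:
  psi i j k = coefficient of X_k in psi(X_i, X_j).\<close>
type_synonym cochain2 = "nat \<Rightarrow> nat \<Rightarrow> nat \<Rightarrow> complex"

text \<open>Structure constants: sc p phi i j k = coefficient of X_k in [X_i, X_j].\<close>
definition sc :: "nat \<Rightarrow> (nat \<Rightarrow> complex) \<Rightarrow> nat \<Rightarrow> nat \<Rightarrow> nat \<Rightarrow> complex" where
  "sc p phi i j k =
    (if i = 1 \<and> j = 2 \<and> k = 1 then 1
     else if i = 2 \<and> j = 1 \<and> k = 1 then -1
     else if i = 2 \<and> 3 \<le> j \<and> j \<le> 2*p \<and> k = j \<and> odd j then phi ((j - 1) div 2)
     else if j = 2 \<and> 3 \<le> i \<and> i \<le> 2*p \<and> k = i \<and> odd i then - phi ((i - 1) div 2)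
     else if i = 2 \<and> 4 \<le> j \<and> j \<le> 2*p \<and> k = j \<and> even j then - (1 + phi ((j - 2) div 2))
     else if j = 2 \<and> 4 \<le> i \<and> i \<le> 2*p \<and> k = i \<and> even i then (1 + phi ((i - 2) div 2))
     else if 3 \<le> i \<and> odd i \<and> j = i + 1 \<and> j \<le> 2*p \<and> k = 1 then 1
     else if 3 \<le> j \<and> odd j \<and> i = j + 1 \<and> i \<le> 2*p \<and> k = 1 then -1
     else 0)"

definition gdeg :: "nat \<Rightarrow> int" where
  "gdeg i = (if i = 2 then 0 else if i = 1 then 2 else 1)"

definition is_cochain2 :: "nat \<Rightarrow> cochain2 \<Rightarrow> bool" where
  "is_cochain2 p psi \<longleftrightarrow>
     (\<forall>i j k. (i \<notin> {1..2*p} \<or> j \<notin> {1..2*p} \<or> k \<notin> {1..2*p}) \<longrightarrow> psi i j k = 0) \<and>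
     (\<forall>i j k. psi i j k = - psi j i k)"

definition homogeneous :: "nat \<Rightarrow> int \<Rightarrow> cochain2 \<Rightarrow> bool" where
  "homogeneous p d psi \<longleftrightarrow>
     (\<forall>i\<in>{1..2*p}. \<forall>j\<in>{1..2*p}. \<forall>k\<in>{1..2*p}.
        psi i j k \<noteq> 0 \<longrightarrow> gdeg k = gdeg i + gdeg j + d)"

definition ad_vec :: "nat \<Rightarrow> (nat \<Rightarrow> complex) \<Rightarrow> nat \<Rightarrow> vec \<Rightarrow> vec" where
  "ad_vec p phi i v = (\<lambda>m. \<Sum>a\<in>{1..2*p}. v a * sc p phi i a m)"

definition psi_br :: "nat \<Rightarrow> (nat \<Rightarrow> complex) \<Rightarrow> cochain2 \<Rightarrow> nat \<Rightarrow> nat \<Rightarrow> nat \<Rightarrow> vec" where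
  "psi_br p phi psi i j l = (\<lambda>m. \<Sum>a\<in>{1..2*p}. sc p phi i j a * psi a l m)"

text \<open>Chevalley-Eilenberg differential (adjoint coefficients) on basis triples:
  d psi (x,y,z) = [x,psi(y,z)] - [y,psi(x,z)] + [z,psi(x,y)]
                 - psi([x,y],z) + psi([x,z],y) - psi([y,z],x).\<close>
definition d2 :: "nat \<Rightarrow> (nat \<Rightarrow> complex) \<Rightarrow> cochain2 \<Rightarrow> nat \<Rightarrow> nat \<Rightarrow> nat \<Rightarrow> vec" where
  "d2 p phi psi i j l = (\<lambda>m.
       ad_vec p phi i (psi j l) m - ad_vec p phi j (psi i l) m + ad_vec p phi l (psi i j) m
     - psi_br p phi psi i j l m + psi_br p phi psi i l j m - psi_br p phi psi j l i m)"

definition is_cocycle2 :: "nat \<Rightarrow> (nat \<Rightarrow> complex) \<Rightarrow> cochain2 \<Rightarrow> bool" where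
  "is_cocycle2 p phi psi \<longleftrightarrow>
     (\<forall>i\<in>{1..2*p}. \<forall>j\<in>{1..2*p}. \<forall>l\<in>{1..2*p}. \<forall>m\<in>{1..2*p}. d2 p phi psi i j l m = 0)"

definition Z2 :: "nat \<Rightarrow> (nat \<Rightarrow> complex) \<Rightarrow> int \<Rightarrow> cochain2 set" where
  "Z2 p phi d = {psi. is_cochain2 p psi \<and> homogeneous p d psi \<and> is_cocycle2 p phi psi}"

definition cscale :: "complex \<Rightarrow> cochain2 \<Rightarrow> cochain2" where
  "cscale c psi = (\<lambda>i j k. c * psi i j k)"

lemma vector_space_cscale: "vector_space cscale"
  by unfold_locales (auto simp: cscale_def fun_eq_iff algebra_simps)

definition psi12 :: "nat \<Rightarrow> cochain2" where
  "psi12 j = (\<lambda>a b m. if a = 2 \<and> b = j \<and> m = 1 then 1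
                      else if a = j \<and> b = 2 \<and> m = 1 then -1 else 0)"

definition in_Omega1 :: "nat \<Rightarrow> (nat \<Rightarrow> complex) \<Rightarrow> bool" where
  "in_Omega1 p phi \<longleftrightarrow>
     (\<exists>i\<in>{1..p-1}. \<exists>j\<in>{1..p-1}. 1 + phi i + phi j = 0 \<or> 2 + phi i + phi j = 0
                                 \<or> (i \<noteq> j \<and> phi i - phi j = 0)) \<or>
     (\<exists>i\<in>{1..p-1}. phi i = 0 \<or> phi i + 1 = 0 \<or> 2 * phi i + 1 = 0)"

definition in_Omega2 :: "nat \<Rightarrow> (nat \<Rightarrow> complex) \<Rightarrow> bool" where
  "in_Omega2 p phi \<longleftrightarrow>
     (\<exists>i\<in>{1..p-1}. \<exists>j\<in>{1..p-1}. 1 + phi i - phi j = 0 \<or> phi i + phi j = 0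
        \<or> 1 + 2 * phi i - phi j = 0 \<or> 1 + 2 * phi i + phi j = 0
        \<or> 2 * phi i - phi j = 0 \<or> 2 + 2 * phi i + phi j = 0) \<or>
     (\<exists>i\<in>{1..p-1}. 2 + phi i = 0 \<or> 1 - phi i = 0)"

definition in_Omega :: "nat \<Rightarrow> (nat \<Rightarrow> complex) \<Rightarrow> bool" where
  "in_Omega p phi \<longleftrightarrow> in_Omega1 p phi \<or> in_Omega2 p phi"

end

theory Submission
  imports Defs
begin

text \<open>Since gdeg X_1 = 2 = gdeg X_2 + gdeg X_b + 1 for b \<ge> 3 and no other degree
combination fits, a homogeneous 2-cochain of degree 1 is determined by
psi(X_2, X_b) = c_b X_1 (3 \<le> b \<le> 2p). Every such cochain is a cocycle: the
differential is alternating, and on a triple of distinct basis vectors each of its six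
terms vanishes on its own, because a nonzero term needs X_2 in two slots. So Z^2_1 is
freely spanned by the 2(p - 1) cochains psi^1_{2,b}.\<close>

lemma sc_antisym: "sc p phi j i k = - sc p phi i j k"
  by (auto simp: sc_def)

lemma sc_same: "sc p phi i i k = 0"
  using sc_antisym[of p phi i i k] by simp

lemma sc_X1_right: "sc p phi i 1 m = (if i = 2 \<and> m = 1 then -1 else 0)"
  by (simp add: sc_def)

lemma sc_X2_eq_0: "sc p phi i j 2 = 0"
  by (auto simp: sc_def)

lemma sc_eq_0_if_not_X2: "3 \<le> a \<Longrightarrow> i \<noteq> 2 \<Longrightarrow> j \<noteq> 2 \<Longrightarrow> sc p phi i j a = 0"
  by (simp add: sc_def)

lemma ad_vec_neg: "ad_vec p phi i (\<lambda>m. - v m) = (\<lambda>m. - ad_vec p phi i v m)"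
  by (simp add: ad_vec_def sum_negf)

lemma psi_br_swap: "psi_br p phi psi j i l m = - psi_br p phi psi i j l m"
  unfolding psi_br_def sc_antisym[of p phi i j] by (simp add: sum_negf)

lemma d2_eq_0_if_repeated:
  assumes antisym: "\<And>i j k. psi i j k = - psi j i k"
    and "i = j \<or> j = l \<or> i = l"
  shows "d2 p phi psi i j l m = 0"
proof -
  have psi_same: "psi a a = (\<lambda>k. 0)" for a
  proof
    show "psi a a k = 0" for k
      using antisym[of a a k] by (simp add: eq_neg_iff_add_eq_0)
  qed
  have br_same: "psi_br p phi psi a a b = (\<lambda>k. 0)" for a b
    by (simp add: psi_br_def sc_same fun_eq_iff)
  have ad_zero: "ad_vec p phi a (\<lambda>k. 0) = (\<lambda>k. 0)" for a
    by (simp add: ad_vec_def fun_eq_iff)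
  have psi_swap: "psi j i = (\<lambda>k. - psi i j k)" for i j
    by (rule ext) (rule antisym)
  consider "i = j" | "j = l" | "i = l"
    using assms(2) by blast
  then show ?thesis
  proof cases
    case 1
    then show ?thesis
      by (simp add: d2_def psi_same br_same ad_zero)
  next
    case 2
    then show ?thesis
      by (simp add: d2_def psi_same br_same ad_zero)
  next
    case 3
    then show ?thesis
      by (simp add: d2_def psi_same br_same ad_zero psi_swap[of l j] ad_vec_neg
          psi_br_swap[of p phi psi l j])
  qed
qed

lemma sum_fun_apply: "(\<Sum>x\<in>A. f x) a = (\<Sum>x\<in>A. f x a)"
  by (induction A rule: infinite_finite_induct) auto

lemma ad_vec_multiple_X1:
  assumes "p \<ge> 1" and "\<And>a. a \<noteq> 1 \<Longrightarrow> v a = 0"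
  shows "ad_vec p phi i v m = (if i = 2 \<and> m = 1 then - v 1 else 0)"
proof -
  have "ad_vec p phi i v m = (\<Sum>a\<in>{1..2*p}. if a = 1 then v 1 * sc p phi i 1 m else 0)"
    unfolding ad_vec_def using assms(2) by (intro sum.cong) auto
  also have "\<dots> = v 1 * sc p phi i 1 m"
    using assms(1) by simp
  finally show ?thesis
    unfolding sc_X1_right by simp
qed

definition deg1_cochain :: "nat \<Rightarrow> (nat \<Rightarrow> complex) \<Rightarrow> cochain2" where
  "deg1_cochain p c = (\<lambda>a b m.
     if m = 1 \<and> a = 2 \<and> b \<in> {3..2*p} then c b
     else if m = 1 \<and> b = 2 \<and> a \<in> {3..2*p} then - c a
     else 0)"

lemma psi_br_deg1_cochain:
  assumes "l = 2 \<longrightarrow> i \<noteq> 2 \<and> j \<noteq> 2"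
  shows "psi_br p phi (deg1_cochain p c) i j l m = 0"
  unfolding psi_br_def
proof (intro sum.neutral ballI)
  fix a
  show "sc p phi i j a * deg1_cochain p c a l m = 0"
    using assms by (auto simp: deg1_cochain_def sc_X2_eq_0 sc_eq_0_if_not_X2)
qed

lemma deg1_cochain_cocycle:
  assumes "p \<ge> 1"
  shows "is_cocycle2 p phi (deg1_cochain p c)"
  unfolding is_cocycle2_def
proof (intro ballI)
  fix i j l m
  show "d2 p phi (deg1_cochain p c) i j l m = 0"
  proof (cases "i = j \<or> j = l \<or> i = l")
    case True
    then show ?thesis
      by (intro d2_eq_0_if_repeated) (auto simp: deg1_cochain_def)
  next
    case False
    have ad: "ad_vec p phi a (deg1_cochain p c b b') m = 0"
      if "a = 2 \<longrightarrow> b \<noteq> 2 \<and> b' \<noteq> 2" for a b b'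
      using that by (subst ad_vec_multiple_X1[OF assms]) (auto simp: deg1_cochain_def)
    from False show ?thesis
      unfolding d2_def by (simp add: ad psi_br_deg1_cochain)
  qed
qed

lemma deg1_cochain_in_Z2:
  assumes "p \<ge> 1"
  shows "deg1_cochain p c \<in> Z2 p phi 1"
proof -
  have "is_cochain2 p (deg1_cochain p c)"
    by (auto simp: is_cochain2_def deg1_cochain_def)
  moreover have "homogeneous p 1 (deg1_cochain p c)"
    by (auto simp: homogeneous_def deg1_cochain_def gdeg_def)
  ultimately show ?thesis
    using deg1_cochain_cocycle[OF assms] by (simp add: Z2_def)
qed

lemma gdeg_eq_add_1_cases:
  assumes "gdeg m = gdeg a + gdeg b + 1" and "a \<noteq> b"
  shows "m = 1 \<and> (a = 2 \<and> b \<notin> {1, 2} \<or> b = 2 \<and> a \<notin> {1, 2})"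
  using assms unfolding gdeg_def by (simp split: if_splits)

lemma homogeneous_1_eq_deg1_cochain:
  assumes "is_cochain2 p psi" and "homogeneous p 1 psi"
  shows "psi = deg1_cochain p (\<lambda>b. psi 2 b 1)"
proof -
  have outside:
      "\<And>a b m. a \<notin> {1..2*p} \<or> b \<notin> {1..2*p} \<or> m \<notin> {1..2*p} \<Longrightarrow> psi a b m = 0"
    and antisym: "\<And>a b m. psi a b m = - psi b a m"
    using assms(1) unfolding is_cochain2_def by blast+
  have support: "m = 1 \<and> (a = 2 \<and> b \<in> {3..2*p} \<or> b = 2 \<and> a \<in> {3..2*p})"
    if nz: "psi a b m \<noteq> 0" for a b m
  proof -
    have range: "a \<in> {1..2*p}" "b \<in> {1..2*p}" "m \<in> {1..2*p}"
      using outside nz by blast+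
    have "psi a a m = 0"
      using antisym[of a a m] by (simp add: eq_neg_iff_add_eq_0)
    then have "a \<noteq> b"
      using nz by auto
    moreover have "gdeg m = gdeg a + gdeg b + 1"
      using assms(2) range nz by (simp add: homogeneous_def)
    ultimately show ?thesis
      using range gdeg_eq_add_1_cases by fastforce
  qed
  show ?thesis
  proof (intro ext)
    fix a b m
    show "psi a b m = deg1_cochain p (\<lambda>b. psi 2 b 1) a b m"
    proof (cases "m = 1 \<and> b = 2 \<and> a \<in> {3..2*p}")
      case True
      then show ?thesis
        using antisym[of a 2 1] by (simp add: deg1_cochain_def)
    next
      case False
      then show ?thesis
        using support[of a b m] by (auto simp: deg1_cochain_def)
    qed
  qed
qed

lemma Z2_1_eq_range_deg1_cochain:
  assumes "p \<ge> 1"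
  shows "Z2 p phi 1 = range (deg1_cochain p)"
proof
  show "range (deg1_cochain p) \<subseteq> Z2 p phi 1"
    using deg1_cochain_in_Z2[OF assms] by blast
  show "Z2 p phi 1 \<subseteq> range (deg1_cochain p)"
  proof
    fix psi
    assume "psi \<in> Z2 p phi 1"
    then have "psi = deg1_cochain p (\<lambda>b. psi 2 b 1)"
      by (intro homogeneous_1_eq_deg1_cochain) (simp_all add: Z2_def)
    then show "psi \<in> range (deg1_cochain p)"
      by (metis rangeI)
  qed
qed

lemma inj_on_psi12: "inj_on psi12 {3..2*p}"
proof (rule inj_onI)
  fix j k
  assume "j \<in> {3..2*p}" "k \<in> {3..2*p}" and eq: "psi12 j = psi12 k"
  have "psi12 k 2 j 1 = psi12 j 2 j 1"
    using eq by simp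
  also have "\<dots> = 1"
    by (simp add: psi12_def)
  finally have "psi12 k 2 j 1 = 1" .
  then show "j = k"
    by (simp add: psi12_def split: if_splits)
qed

lemma sum_mult_psi12_apply:
  "(\<Sum>j\<in>{3..2*p}. c j * psi12 j a b m) = deg1_cochain p c a b m"
proof -
  have psi12_eq: "psi12 j a b m =
      (if j = b then if a = 2 \<and> m = 1 then 1 else 0 else 0)
    - (if j = a then if b = 2 \<and> m = 1 then 1 else 0 else 0)" if "3 \<le> j" for j
    using that unfolding psi12_def by auto
  have "(\<Sum>j\<in>{3..2*p}. c j * psi12 j a b m) =
      (\<Sum>j\<in>{3..2*p}. if j = b then if a = 2 \<and> m = 1 then c j else 0 else 0)
    - (\<Sum>j\<in>{3..2*p}. if j = a then if b = 2 \<and> m = 1 then c j else 0 else 0)"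
    unfolding sum_subtractf[symmetric] by (intro sum.cong) (auto simp: psi12_eq)
  then show ?thesis
    by (auto simp: deg1_cochain_def)
qed

lemma sum_scale_psi12:
  "(\<Sum>v\<in>psi12 ` {3..2*p}. cscale (u v) v) = deg1_cochain p (u \<circ> psi12)"
  by (simp add: fun_eq_iff sum.reindex[OF inj_on_psi12] sum_fun_apply cscale_def
      sum_mult_psi12_apply comp_def)

lemma span_psi12: "module.span cscale (psi12 ` {3..2*p}) = range (deg1_cochain p)"
proof -
  interpret vector_space cscale
    by (rule vector_space_cscale)
  have "deg1_cochain p c = deg1_cochain p ((c \<circ> inv_into {3..2*p} psi12) \<circ> psi12)" for c
    by (auto simp: deg1_cochain_def fun_eq_iff inv_into_f_f[OF inj_on_psi12])
  then show ?thesis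
    by (auto simp: span_finite sum_scale_psi12)
qed

lemma independent_psi12: "\<not> module.dependent cscale (psi12 ` {3..2*p})"
proof -
  interpret vector_space cscale
    by (rule vector_space_cscale)
  have "u v = 0"
    if zero: "deg1_cochain p (u \<circ> psi12) = 0" and v: "v \<in> psi12 ` {3..2*p}" for u v
  proof -
    obtain j where j: "j \<in> {3..2*p}" "v = psi12 j"
      using v by blast
    have "deg1_cochain p (u \<circ> psi12) 2 j 1 = 0"
      using zero by simp
    then show ?thesis
      using j by (simp add: deg1_cochain_def)
  qed
  then show ?thesis
    by (auto simp: dependent_finite sum_scale_psi12)
qed

theorem lemma6:
  fixes p :: nat and phi :: "nat \<Rightarrow> complex"
  assumes "p \<ge> 2" and "\<not> in_Omega p phi"
  shows "vector_space.dim cscale (Z2 p phi 1) = 2 * (p - 1)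
       \<and> psi12 ` {3..2*p} \<subseteq> Z2 p phi 1
       \<and> inj_on psi12 {3..2*p}
       \<and> \<not> module.dependent cscale (psi12 ` {3..2*p})
       \<and> module.span cscale (psi12 ` {3..2*p}) = Z2 p phi 1"
proof -
  interpret vector_space cscale
    by (rule vector_space_cscale)
  have span: "span (psi12 ` {3..2*p}) = Z2 p phi 1"
    using span_psi12 Z2_1_eq_range_deg1_cochain assms(1) by simp
  have "dim (Z2 p phi 1) = card (psi12 ` {3..2*p})"
    using dim_span_eq_card_independent[OF independent_psi12[of p]] unfolding span .
  also have "\<dots> = 2 * (p - 1)"
    using card_image[OF inj_on_psi12] assms(1) by simp
  finally show ?thesis
    using span_superset[of "psi12 ` {3..2*p}", unfolded span] span inj_on_psi12 independent_psi12
    by blast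
qed

end
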